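(* Let $R\subseteq\mathbb{N}$ be such that there is a positive integer $k$ with $R\cap k\mathbb{Z}=\emptyset$. Then for any positive integer $d$, there exists a colouring of $\mathbb{R}^d$ with $2k^2$ colours containing no monochromatic congruent copy of $rL^d$ for any $r\in R$.
   Context: $L^d$ denotes a three-point set $\{x,y,z\}\subseteq\mathbb{Z}^d$ with $\|x-y\|_2=\|y-z\|_2=1$ and $\|x-z\|_2=2$ (three equally spaced collinear points), and $rL^d=\{rx,ry,rz\}$. A congruent copy is the image under an isometry of $\mathbb{R}^d$. *)

theory Defs
  imports "HOL-Analysis.Analysis"
begin

definition int_point :: "real^'n \<Rightarrow> bool" where
  "int_point x \<longleftrightarrow> (\<forall>i. x $ i \<in> \<int>)"

definition isometry_map :: "(real^'n \<Rightarrow> real^'n) \<Rightarrow> bool" where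
  "isometry_map f \<longleftrightarrow> (\<forall>x y. dist (f x) (f y) = dist x y)"

text \<open>T is a congruent copy of r L^d: the image under an isometry of {r x, r y, r z},
  where {x,y,z} is a set L^d of integer points with |x-y|=|y-z|=1, |x-z|=2.\<close>
definition congruent_copy_rL :: "real \<Rightarrow> (real^'n) set \<Rightarrow> bool" where
  "congruent_copy_rL r T \<longleftrightarrow>
     (\<exists>f x y z. isometry_map f \<and> int_point x \<and> int_point y \<and> int_point z \<and>
        dist x y = 1 \<and> dist y z = 1 \<and> dist x z = 2 \<and>
        T = f ` {r *\<^sub>R x, r *\<^sub>R y, r *\<^sub>R z})"

definition monochromatic :: "('a \<Rightarrow> nat) \<Rightarrow> 'a set \<Rightarrow> bool" where
  "monochromatic c T \<longleftrightarrow> (\<exists>col. \<forall>p\<in>T. c p = col)"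

end

theory Submission
  imports Defs
begin

(* Colour p by floor(|p|^2) mod 2k^2. If a, b, c are equally spaced on a line with spacing r,
   then |a|^2 - 2|b|^2 + |c|^2 = 2r^2. Replacing each squared norm by its floor changes this
   second difference by less than 2, so if the three floors agree modulo the even number 2k^2,
   parity forces 2k^2 to divide 2r^2, i.e. k divides r. *)

lemma equal_half_dists_imp_midpoint:
  fixes a b c :: "'a::real_inner"
  assumes "dist a b = r" "dist b c = r" "dist a c = 2 * r"
  shows "a - b = b - c"
proof -
  define u where "u = a - b"
  define v where "v = b - c"
  have parallelogram: "norm (u - v) ^ 2 = 2 * norm u ^ 2 + 2 * norm v ^ 2 - norm (u + v) ^ 2"
    by (simp add: power2_norm_eq_inner algebra_simps inner_commute)
  have "norm u = r" "norm v = r" "norm (u + v) = 2 * r"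
    using assms by (simp_all add: dist_norm u_def v_def)
  with parallelogram have "norm (u - v) ^ 2 = 0"
    by (simp add: power_mult_distrib)
  then show ?thesis
    by (simp add: u_def v_def)
qed

lemma norm_sq_second_difference:
  fixes a b c :: "'a::real_inner"
  assumes "a - b = b - c"
  shows "norm a ^ 2 - 2 * norm b ^ 2 + norm c ^ 2 = 2 * norm (a - b) ^ 2"
proof -
  define u where "u = a - b"
  have "a = b + u" "c = b - u"
    using assms by (simp_all add: u_def algebra_simps)
  moreover have "norm (b + u) ^ 2 - 2 * norm b ^ 2 + norm (b - u) ^ 2 = 2 * norm u ^ 2"
    by (simp add: power2_norm_eq_inner algebra_simps inner_commute)
  ultimately show ?thesis
    by (simp add: u_def)
qed

lemma second_difference_eq_floor_second_difference:
  fixes x y z :: real and n :: int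
  assumes "x - 2 * y + z = of_int n" "even n" "even (\<lfloor>x\<rfloor> + \<lfloor>z\<rfloor>)"
  shows "n = \<lfloor>x\<rfloor> - 2 * \<lfloor>y\<rfloor> + \<lfloor>z\<rfloor>"
proof -
  have "of_int (n - (\<lfloor>x\<rfloor> - 2 * \<lfloor>y\<rfloor> + \<lfloor>z\<rfloor>)) = frac x - 2 * frac y + frac z"
    using assms(1) by (simp add: frac_def)
  moreover have "\<bar>frac x - 2 * frac y + frac z\<bar> < 2"
    using frac_lt_1 [of x] frac_lt_1 [of y] frac_lt_1 [of z]
      frac_ge_0 [of x] frac_ge_0 [of y] frac_ge_0 [of z]
    by linarith
  ultimately have "\<bar>n - (\<lfloor>x\<rfloor> - 2 * \<lfloor>y\<rfloor> + \<lfloor>z\<rfloor>)\<bar> < 2"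
    by linarith
  moreover have "even (n - (\<lfloor>x\<rfloor> - 2 * \<lfloor>y\<rfloor> + \<lfloor>z\<rfloor>))"
    using assms(2,3) by simp
  ultimately show ?thesis
    by presburger
qed

lemma floor_cong_imp_dvd_second_difference:
  fixes x y z :: real and m n :: int
  assumes "x - 2 * y + z = of_int n" "even n" "even m"
    and "\<lfloor>x\<rfloor> mod m = \<lfloor>y\<rfloor> mod m" "\<lfloor>z\<rfloor> mod m = \<lfloor>y\<rfloor> mod m"
  shows "m dvd n"
proof -
  have "m dvd \<lfloor>x\<rfloor> - \<lfloor>y\<rfloor>" "m dvd \<lfloor>z\<rfloor> - \<lfloor>y\<rfloor>"
    using assms(4,5) by (simp_all add: mod_eq_dvd_iff)
  then have "m dvd (\<lfloor>x\<rfloor> - \<lfloor>y\<rfloor>) + (\<lfloor>z\<rfloor> - \<lfloor>y\<rfloor>)"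
    by (rule dvd_add)
  also have "(\<lfloor>x\<rfloor> - \<lfloor>y\<rfloor>) + (\<lfloor>z\<rfloor> - \<lfloor>y\<rfloor>) = \<lfloor>x\<rfloor> - 2 * \<lfloor>y\<rfloor> + \<lfloor>z\<rfloor>"
    by simp
  finally have dvd: "m dvd \<lfloor>x\<rfloor> - 2 * \<lfloor>y\<rfloor> + \<lfloor>z\<rfloor>" .
  with \<open>even m\<close> have "even (\<lfloor>x\<rfloor> - 2 * \<lfloor>y\<rfloor> + \<lfloor>z\<rfloor>)"
    by (rule dvd_trans)
  then have "even (\<lfloor>x\<rfloor> + \<lfloor>z\<rfloor>)"
    by simp
  with second_difference_eq_floor_second_difference [OF assms(1,2)]
  have "n = \<lfloor>x\<rfloor> - 2 * \<lfloor>y\<rfloor> + \<lfloor>z\<rfloor>" .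
  with dvd show ?thesis
    by simp
qed

definition norm_sq_colouring :: "nat \<Rightarrow> 'a::real_normed_vector \<Rightarrow> nat" where
  "norm_sq_colouring m p = nat (\<lfloor>norm p ^ 2\<rfloor> mod int m)"

lemma norm_sq_colouring_less: "m > 0 \<Longrightarrow> norm_sq_colouring m p < m"
  by (simp add: norm_sq_colouring_def nat_less_iff)

lemma norm_sq_colouring_eq_iff:
  "m > 0 \<Longrightarrow> norm_sq_colouring m p = norm_sq_colouring m q \<longleftrightarrow>
     \<lfloor>norm p ^ 2\<rfloor> mod int m = \<lfloor>norm q ^ 2\<rfloor> mod int m"
  by (auto simp: norm_sq_colouring_def nat_eq_iff2)

lemma equally_spaced_monochromatic_imp_dvd:
  fixes a b c :: "'a::real_inner"
  assumes "k > 0" "dist a b = real r" "dist b c = real r" "dist a c = 2 * real r"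
    and "monochromatic (norm_sq_colouring (2 * k ^ 2)) {a, b, c}"
  shows "k dvd r"
proof -
  define m where "m = 2 * k ^ 2"
  have "m > 0"
    using assms(1) by (simp add: m_def)
  have second_difference: "norm a ^ 2 - 2 * norm b ^ 2 + norm c ^ 2 = of_int (2 * int r ^ 2)"
    using assms(2-4) equal_half_dists_imp_midpoint norm_sq_second_difference
    by (metis dist_norm of_int_mult of_int_numeral of_int_of_nat_eq of_int_power)
  have "norm_sq_colouring m a = norm_sq_colouring m b"
    "norm_sq_colouring m c = norm_sq_colouring m b"
    using assms(5) by (auto simp: monochromatic_def m_def)
  then have cong: "\<lfloor>norm a ^ 2\<rfloor> mod int m = \<lfloor>norm b ^ 2\<rfloor> mod int m"
    "\<lfloor>norm c ^ 2\<rfloor> mod int m = \<lfloor>norm b ^ 2\<rfloor> mod int m"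
    using \<open>m > 0\<close> by (simp_all add: norm_sq_colouring_eq_iff)
  have "even (int m)"
    by (simp add: m_def)
  with second_difference cong have "int m dvd 2 * int r ^ 2"
    using floor_cong_imp_dvd_second_difference by simp
  then have "int k ^ 2 dvd int r ^ 2"
    by (simp add: m_def)
  then show ?thesis
    by (simp add: pow_divides_pow_iff flip: of_nat_power)
qed

lemma congruent_copy_rL_imp_equally_spaced:
  assumes "r \<ge> 0" "congruent_copy_rL r T"
  shows "\<exists>a b c. T = {a, b, c} \<and> dist a b = r \<and> dist b c = r \<and> dist a c = 2 * r"
proof -
  obtain f x y z where f: "isometry_map f"
    and xyz: "dist x y = 1" "dist y z = 1" "dist x z = 2"
    and T: "T = f ` {r *\<^sub>R x, r *\<^sub>R y, r *\<^sub>R z}"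
    using assms(2) unfolding congruent_copy_rL_def by blast
  have "dist (f (r *\<^sub>R u)) (f (r *\<^sub>R v)) = r * dist u v" for u v
    using f assms(1) by (simp add: isometry_map_def dist_norm flip: scaleR_diff_right)
  with xyz T show ?thesis
    by (intro exI [of _ "f (r *\<^sub>R x)"] exI [of _ "f (r *\<^sub>R y)"] exI [of _ "f (r *\<^sub>R z)"]) simp
qed

theorem proposition30:
  fixes R :: "nat set" and k :: nat
  assumes "k > 0" and "\<forall>r\<in>R. \<not> k dvd r"
  shows "\<exists>c :: real^'n \<Rightarrow> nat. (\<forall>p. c p < 2 * k^2) \<and>
           (\<forall>r\<in>R. \<forall>T. congruent_copy_rL (real r) T \<longrightarrow> \<not> monochromatic c T)"
proof (intro exI conjI ballI allI impI notI)
  show "norm_sq_colouring (2 * k ^ 2) p < 2 * k ^ 2" for p :: "real^'n"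
    using assms(1) by (simp add: norm_sq_colouring_less)
next
  fix r T
  assume "r \<in> R" "congruent_copy_rL (real r) T"
    and mono: "monochromatic (norm_sq_colouring (2 * k ^ 2)) (T :: (real^'n) set)"
  then obtain a b c where "T = {a, b, c}"
    and "dist a b = real r" "dist b c = real r" "dist a c = 2 * real r"
    using congruent_copy_rL_imp_equally_spaced [OF of_nat_0_le_iff] by blast
  with assms(1) mono have "k dvd r"
    using equally_spaced_monochromatic_imp_dvd by blast
  with assms(2) \<open>r \<in> R\<close> show False
    by blast
qed

end
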